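(* Let $d\ge 2$ and let $C$, $C_1$, $C_2$ be $d$-dimensional copulas admitting tail copulas $\Lambda(\cdot;C)$, $\Lambda_1(\cdot;C_1)$, $\Lambda_2(\cdot;C_2)$, respectively. Then: (i) The supremum in $\lambda^\ast(C)=\sup_{\bm b\in\mathcal B}\Lambda(\bm b;C)$ is attained; hence $\lambda^\ast(C)=\max_{\bm b\in\mathcal B}\Lambda(\bm b;C)$. (ii) $\lambda^\ast(C)=1$ if and only if $\Lambda(\bm x;C)=\min\{x_1,\dots,x_d\}$ for all $\bm x\in(0,\infty)^d$. (iii) $\lambda^\ast(C)=0$ if and only if $\Lambda(\bm x;C)=0$ for all $\bm x\in(0,\infty)^d$. (iv) If $\Lambda_1(\bm x;C_1)\le\Lambda_2(\bm x;C_2)$ for all $\bm x\in(0,\infty)^d$, then $\lambda^\ast(C_1)\le\lambda^\ast(C_2)$. (v) For all $t\in[0,1]$, $\lambda^\ast(tC_1+(1-t)C_2)\le t\lambda^\ast(C_1)+(1-t)\lambda^\ast(C_2)$. (vi) Let $(C_n)_{n\in\mathbb N}$ be a sequence of $d$-dimensional copulas each admitting a tail copula. If $\Lambda(\bm x;C_n)\to\Lambda(\bm x;C)$ for every $\bm x\in(0,\infty)^d$, then $\lambda^\ast(C_n)\to\lambda^\ast(C)$.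
   Context: A $d$-dimensional copula is a distribution function on $[0,1]^d$ with standard uniform margins. If for a copula $C$ the limit $\Lambda(\bm x;C)=\lim_{t\downarrow0}C(t\bm x)/t$ exists for every $\bm x\in(0,\infty)^d$, the function $\Lambda(\cdot;C):(0,\infty)^d\to[0,\infty)$ is called the (lower) tail copula of $C$. Let $\mathcal B=\{\bm b\in(0,\infty)^d:\prod_{j=1}^d b_j=1\}$. The maximal tail concordance measure (MTCM) of $C$ is $\lambda^\ast(C)=\sup_{\bm b\in\mathcal B}\Lambda(\bm b;C)$. *)

theory Defs
  imports "HOL-Probability.Probability"
begin

text \<open>A d-dimensional copula (d = CARD('d)): the distribution function, restricted to
  the unit cube, of a Borel probability measure on real^'d with standard uniform margins.\<close>
definition is_copula :: "(real ^ 'd \<Rightarrow> real) \<Rightarrow> bool" where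
  "is_copula C \<longleftrightarrow>
     (\<exists>M :: (real ^ 'd) measure.
        prob_space M \<and> sets M = sets borel \<and>
        (\<forall>j. \<forall>s\<in>{0..1}. measure M {x. x $ j \<le> s} = s) \<and>
        (\<forall>u. (\<forall>i. u $ i \<in> {0..1}) \<longrightarrow> C u = measure M {x. \<forall>i. x $ i \<le> u $ i}))"

definition pos_orthant :: "(real ^ 'd) set" where
  "pos_orthant = {x. \<forall>i. 0 < x $ i}"

definition has_tail_copula :: "(real ^ 'd \<Rightarrow> real) \<Rightarrow> bool" where
  "has_tail_copula C \<longleftrightarrow>
     (\<forall>x\<in>pos_orthant. \<exists>L. ((\<lambda>t. C (t *\<^sub>R x) / t) \<longlongrightarrow> L) (at_right 0))"

definition tail_copula :: "(real ^ 'd \<Rightarrow> real) \<Rightarrow> real ^ 'd \<Rightarrow> real" where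
  "tail_copula C x = Lim (at_right 0) (\<lambda>t. C (t *\<^sub>R x) / t)"

definition B_set :: "(real ^ 'd) set" where
  "B_set = {b. (\<forall>i. 0 < b $ i) \<and> (\<Prod>i\<in>UNIV. b $ i) = 1}"

definition mtcm :: "(real ^ 'd \<Rightarrow> real) \<Rightarrow> real" where
  "mtcm C = (SUP b\<in>B_set. tail_copula C b)"

end

theory Submission
  imports Defs
begin

text \<open>From the copula the tail copula inherits the bounds \<open>0 \<le> \<Lambda>(x) \<le> min\<^sub>i x\<^sub>i\<close>,
  monotonicity, positive homogeneity and a Lipschitz bound with constant \<open>d\<close>. On \<open>B\<close>,
  points with a coordinate below \<open>e\<close> have \<open>\<Lambda> < e\<close>, while the points all of whose
  coordinates are at least \<open>e\<close> form a compact set. Hence the supremum is a maximum of a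
  continuous function on a compact set, and pointwise convergence of the uniformly Lipschitz
  functions \<open>\<Lambda>(\<cdot>;C\<^sub>n)\<close> is uniform there, which gives continuity of \<open>\<lambda>\<^sup>*\<close>. The
  characterisations of \<open>\<lambda>\<^sup>* = 1\<close> and \<open>\<lambda>\<^sup>* = 0\<close> follow from attainment, the bounds and
  homogeneity, since every point of the positive orthant is a positive multiple of a point
  of \<open>B\<close>; monotonicity and convexity are immediate from the definition as a supremum.\<close>

lemma prod_eq_1_imp_eq_1:
  fixes b :: "'a \<Rightarrow> real"
  assumes "finite I" "\<And>i. i \<in> I \<Longrightarrow> 1 \<le> b i" "(\<Prod>i\<in>I. b i) = 1" "j \<in> I"
  shows "b j = 1"
proof -
  have "b j * 1 \<le> b j * (\<Prod>i\<in>I - {j}. b i)"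
    using assms by (intro mult_left_mono prod_ge_1) (auto intro: order.trans[OF zero_le_one])
  also have "\<dots> = 1"
    using assms prod.remove[of I j b] by simp
  finally show ?thesis
    using assms(2,4) by (simp add: order_antisym)
qed

lemma sum_abs_diff_le_card_dist_cart:
  fixes x y :: "real ^ 'n"
  shows "(\<Sum>i\<in>UNIV. \<bar>x $ i - y $ i\<bar>) \<le> real CARD('n) * dist x y"
proof -
  have "(\<Sum>i\<in>UNIV. \<bar>x $ i - y $ i\<bar>) \<le> (\<Sum>i\<in>(UNIV :: 'n set). dist x y)"
    using component_le_norm_cart[of "x - y"] by (intro sum_mono) (simp add: dist_norm)
  then show ?thesis by simp
qed

lemma uniform_limit_equi_lipschitz_compact:
  fixes f :: "nat \<Rightarrow> 'a::metric_space \<Rightarrow> 'b::metric_space"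
  assumes "compact K" "\<And>n. L-lipschitz_on K (f n)" "L-lipschitz_on K g"
    and "\<And>x. x \<in> K \<Longrightarrow> (\<lambda>n. f n x) \<longlonglongrightarrow> g x"
  shows "uniform_limit K f g sequentially"
  unfolding uniform_limit_iff
proof (intro allI impI)
  fix e :: real
  assume e: "0 < e"
  have L: "0 \<le> L"
    using assms(3) by (rule lipschitz_on_nonneg)
  define d where "d = e / (3 * (L + 1))"
  have d: "0 < d" "L * d \<le> e / 3"
    using e L by (auto simp: d_def field_simps)
  obtain k where k: "k \<subseteq> K" "finite k" "K \<subseteq> (\<Union>c\<in>k. ball c d)"
    using compactE_image[OF assms(1), of K "\<lambda>c. ball c d"] d(1) by force
  have "eventually (\<lambda>n. \<forall>c\<in>k. dist (f n c) (g c) < e / 3) sequentially"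
    using k(1,2) e assms(4) by (intro eventually_ball_finite ballI tendstoD) auto
  then show "eventually (\<lambda>n. \<forall>x\<in>K. dist (f n x) (g x) < e) sequentially"
  proof eventually_elim
    case (elim n)
    show ?case
    proof
      fix x
      assume x: "x \<in> K"
      then obtain c where c: "c \<in> k" "dist c x < d"
        using k(3) by auto
      then have "c \<in> K" using k(1) by blast
      have "dist (f n x) (g x) \<le> dist (f n x) (f n c) + dist (f n c) (g c) + dist (g c) (g x)"
        using dist_triangle[of "f n x" "g x" "f n c"] dist_triangle[of "f n c" "g x" "g c"]
        by linarith
      also have "\<dots> < L * d + e / 3 + L * d"
      proof -
        have "L * dist c x \<le> L * d"
          using c(2) L by (intro mult_left_mono) auto
        then have "dist (f n x) (f n c) \<le> L * d" "dist (g c) (g x) \<le> L * d"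
          using lipschitz_onD[OF assms(2) x \<open>c \<in> K\<close>, of n] lipschitz_onD[OF assms(3) \<open>c \<in> K\<close> x]
          by (simp_all add: dist_commute)
        then show ?thesis using elim c(1) by fastforce
      qed
      also have "\<dots> \<le> e" using d(2) by linarith
      finally show "dist (f n x) (g x) < e" .
    qed
  qed
qed

lemma is_copulaE:
  fixes C :: "real ^ 'd \<Rightarrow> real"
  assumes "is_copula C"
  obtains M :: "(real ^ 'd) measure"
  where "prob_space M" "sets M = sets borel"
    and "\<And>j s. s \<in> {0..1} \<Longrightarrow> measure M {x. x $ j \<le> s} = s"
    and "\<And>u. (\<forall>i. u $ i \<in> {0..1}) \<Longrightarrow> C u = measure M {x. \<forall>i. x $ i \<le> u $ i}"
  using assms unfolding is_copula_def by blast

lemma copula_nonneg: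
  assumes "is_copula C" "\<forall>i. u $ i \<in> {0..1}"
  shows "0 \<le> C u"
  using assms by (elim is_copulaE) simp

lemma copula_le_component:
  assumes "is_copula C" "\<forall>i. u $ i \<in> {0..1}"
  shows "C u \<le> u $ j"
proof -
  obtain M where M: "prob_space M" "sets M = sets borel"
    "\<And>j s. s \<in> {0..1} \<Longrightarrow> measure M {x. x $ j \<le> s} = s"
    "C u = measure M {x. \<forall>i. x $ i \<le> u $ i}"
    using assms by (elim is_copulaE) simp
  interpret prob_space M by fact
  have "measure M {x. \<forall>i. x $ i \<le> u $ i} \<le> measure M {x. x $ j \<le> u $ j}"
    by (rule finite_measure_mono) (auto simp: M(2))
  then show ?thesis using M(3,4) assms(2) by simp
qed

lemma copula_mono:
  assumes "is_copula C" "\<forall>i. u $ i \<in> {0..1}" "\<forall>i. v $ i \<in> {0..1}" "\<forall>i. u $ i \<le> v $ i"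
  shows "C u \<le> C v"
proof -
  obtain M where M: "prob_space M" "sets M = sets borel"
    "C u = measure M {x. \<forall>i. x $ i \<le> u $ i}" "C v = measure M {x. \<forall>i. x $ i \<le> v $ i}"
    using assms by (elim is_copulaE) simp
  interpret prob_space M by fact
  show ?thesis
    unfolding M(3,4) using assms(4)
    by (intro finite_measure_mono) (auto simp: M(2) intro: order_trans)
qed

text \<open>The lower orthant of \<open>v\<close> is covered by that of \<open>u\<close> together with the slabs
  \<open>u $ i < x $ i \<le> v $ i\<close>, each of which has mass at most \<open>\<bar>v $ i - u $ i\<bar>\<close> by uniformity
  of the margins.\<close>
lemma copula_diff_le_sum_abs_diff:
  assumes "is_copula C" "\<forall>i. u $ i \<in> {0..1}" "\<forall>i. v $ i \<in> {0..1}"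
  shows "C v - C u \<le> (\<Sum>i\<in>UNIV. \<bar>v $ i - u $ i\<bar>)"
proof -
  obtain M where M: "prob_space M" "sets M = sets borel"
    "\<And>j s. s \<in> {0..1} \<Longrightarrow> measure M {x. x $ j \<le> s} = s"
    "C u = measure M {x. \<forall>i. x $ i \<le> u $ i}" "C v = measure M {x. \<forall>i. x $ i \<le> v $ i}"
    using assms by (elim is_copulaE) simp
  interpret prob_space M by fact
  define slab where "slab i = {x. x $ i \<le> v $ i} - {x. x $ i \<le> u $ i}" for i
  have slab_sets: "slab i \<in> sets M" for i
    unfolding slab_def M(2) by measurable
  have slab_measure: "measure M (slab i) \<le> \<bar>v $ i - u $ i\<bar>" for i
  proof (cases "v $ i \<le> u $ i")
    case True
    then have "slab i = {}" unfolding slab_def by auto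
    then show ?thesis by simp
  next
    case False
    then have "measure M (slab i) = measure M {x. x $ i \<le> v $ i} - measure M {x. x $ i \<le> u $ i}"
      unfolding slab_def by (intro finite_measure_Diff) (auto simp: M(2))
    also have "\<dots> = v $ i - u $ i" using M(3) assms(2,3) by simp
    finally show ?thesis by simp
  qed
  have "C v \<le> measure M ({x. \<forall>i. x $ i \<le> u $ i} \<union> (\<Union>i. slab i))"
    unfolding M(5) using slab_sets by (intro finite_measure_mono) (auto simp: slab_def M(2))
  also have "\<dots> \<le> C u + measure M (\<Union>i. slab i)"
    unfolding M(4) using slab_sets by (intro measure_subadditive) (auto simp: M(2))
  also have "measure M (\<Union>i. slab i) \<le> (\<Sum>i\<in>UNIV. measure M (slab i))"
    using slab_sets by (intro finite_measure_subadditive_finite) auto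
  also have "\<dots> \<le> (\<Sum>i\<in>UNIV. \<bar>v $ i - u $ i\<bar>)"
    by (intro sum_mono slab_measure)
  finally show ?thesis by simp
qed

lemma tail_copula_tendsto:
  assumes "has_tail_copula C" "x \<in> pos_orthant"
  shows "((\<lambda>t. C (t *\<^sub>R x) / t) \<longlongrightarrow> tail_copula C x) (at_right 0)"
proof -
  obtain L where L: "((\<lambda>t. C (t *\<^sub>R x) / t) \<longlongrightarrow> L) (at_right 0)"
    using assms unfolding has_tail_copula_def by blast
  then have "tail_copula C x = L"
    unfolding tail_copula_def by (intro tendsto_Lim) simp_all
  with L show ?thesis by simp
qed

lemma eventually_scaleR_in_unit_cube:
  fixes x :: "real ^ 'd"
  assumes "x \<in> pos_orthant"
  shows "eventually (\<lambda>t. 0 < t \<and> (\<forall>i. (t *\<^sub>R x) $ i \<in> {0..1})) (at_right 0)"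
proof -
  define m where "m = Max (range (\<lambda>i. x $ i))"
  have x_le_m: "x $ i \<le> m" for i
    unfolding m_def by (intro Max_ge) auto
  have x_pos: "0 < x $ i" for i
    using assms by (simp add: pos_orthant_def)
  then have m_pos: "0 < m"
    using x_le_m less_le_trans by blast
  have "0 < t \<and> (\<forall>i. (t *\<^sub>R x) $ i \<in> {0..1})" if "0 < t" "t < 1 / m" for t
  proof -
    have "t * x $ i \<le> 1" for i
    proof -
      have "t * x $ i \<le> t * m" using that x_le_m by (intro mult_left_mono) auto
      also have "\<dots> \<le> 1" using that m_pos by (simp add: field_simps)
      finally show ?thesis .
    qed
    with that x_pos show ?thesis by (simp add: less_imp_le)
  qed
  then show ?thesis
    unfolding eventually_at_right_field using m_pos by (intro exI[of _ "1 / m"]) auto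
qed

lemma tail_copula_nonneg:
  assumes "is_copula C" "has_tail_copula C" "x \<in> pos_orthant"
  shows "0 \<le> tail_copula C x"
proof (rule tendsto_lowerbound[OF tail_copula_tendsto[OF assms(2,3)]])
  show "eventually (\<lambda>t. 0 \<le> C (t *\<^sub>R x) / t) (at_right 0)"
    using eventually_scaleR_in_unit_cube[OF assms(3)]
    by eventually_elim (simp add: copula_nonneg[OF assms(1)])
qed simp

lemma tail_copula_le_component:
  assumes "is_copula C" "has_tail_copula C" "x \<in> pos_orthant"
  shows "tail_copula C x \<le> x $ j"
proof (rule tendsto_upperbound[OF tail_copula_tendsto[OF assms(2,3)]])
  show "eventually (\<lambda>t. C (t *\<^sub>R x) / t \<le> x $ j) (at_right 0)"
    using eventually_scaleR_in_unit_cube[OF assms(3)]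
  proof eventually_elim
    case (elim t)
    then have "C (t *\<^sub>R x) \<le> t * x $ j"
      using copula_le_component[OF assms(1), of "t *\<^sub>R x" j] by simp
    with elim show ?case by (simp add: field_simps)
  qed
qed simp

lemma tail_copula_mono:
  assumes "is_copula C" "has_tail_copula C" "x \<in> pos_orthant" "y \<in> pos_orthant"
    and "\<forall>i. x $ i \<le> y $ i"
  shows "tail_copula C x \<le> tail_copula C y"
proof (rule tendsto_le[OF _ tail_copula_tendsto[OF assms(2,4)] tail_copula_tendsto[OF assms(2,3)]])
  show "eventually (\<lambda>t. C (t *\<^sub>R x) / t \<le> C (t *\<^sub>R y) / t) (at_right 0)"
    using eventually_conj[OF eventually_scaleR_in_unit_cube[OF assms(3)]
        eventually_scaleR_in_unit_cube[OF assms(4)]]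
  proof eventually_elim
    case (elim t)
    then have "C (t *\<^sub>R x) \<le> C (t *\<^sub>R y)"
      using assms(5) by (intro copula_mono[OF assms(1)]) (auto intro: mult_left_mono)
    with elim show ?case by (simp add: divide_right_mono)
  qed
qed simp

lemma tail_copula_diff_le_sum_abs_diff:
  assumes "is_copula C" "has_tail_copula C" "x \<in> pos_orthant" "y \<in> pos_orthant"
  shows "tail_copula C y - tail_copula C x \<le> (\<Sum>i\<in>UNIV. \<bar>y $ i - x $ i\<bar>)"
proof (rule tendsto_upperbound[OF tendsto_diff[OF tail_copula_tendsto[OF assms(2,4)]
      tail_copula_tendsto[OF assms(2,3)]]])
  show "eventually (\<lambda>t. C (t *\<^sub>R y) / t - C (t *\<^sub>R x) / t \<le> (\<Sum>i\<in>UNIV. \<bar>y $ i - x $ i\<bar>))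
      (at_right 0)"
    using eventually_conj[OF eventually_scaleR_in_unit_cube[OF assms(3)]
        eventually_scaleR_in_unit_cube[OF assms(4)]]
  proof eventually_elim
    case (elim t)
    then have "C (t *\<^sub>R y) - C (t *\<^sub>R x) \<le> (\<Sum>i\<in>UNIV. \<bar>(t *\<^sub>R y) $ i - (t *\<^sub>R x) $ i\<bar>)"
      by (intro copula_diff_le_sum_abs_diff[OF assms(1)]) auto
    also have "\<dots> = t * (\<Sum>i\<in>UNIV. \<bar>y $ i - x $ i\<bar>)"
      using elim by (simp add: sum_distrib_left abs_mult flip: right_diff_distrib)
    finally show ?case using elim by (simp add: field_simps)
  qed
qed simp

lemma tail_copula_lipschitz:
  assumes "is_copula C" "has_tail_copula C"
  shows "(real CARD('d))-lipschitz_on pos_orthant (tail_copula C :: real ^ 'd \<Rightarrow> real)"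
proof (rule lipschitz_onI)
  fix x y :: "real ^ 'd"
  assume xy: "x \<in> pos_orthant" "y \<in> pos_orthant"
  have "tail_copula C y - tail_copula C x \<le> real CARD('d) * dist x y"
    using order_trans[OF tail_copula_diff_le_sum_abs_diff[OF assms xy]
        sum_abs_diff_le_card_dist_cart[of y x]]
    by (simp add: dist_commute)
  moreover have "tail_copula C x - tail_copula C y \<le> real CARD('d) * dist x y"
    using order_trans[OF tail_copula_diff_le_sum_abs_diff[OF assms xy(2,1)]
        sum_abs_diff_le_card_dist_cart[of x y]] .
  ultimately show "dist (tail_copula C x) (tail_copula C y) \<le> real CARD('d) * dist x y"
    by (simp add: dist_real_def abs_le_iff)
qed simp

lemma tail_copula_scaleR:
  assumes "has_tail_copula C" "x \<in> pos_orthant" "0 < c"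
  shows "tail_copula C (c *\<^sub>R x) = c * tail_copula C x"
proof -
  have "filterlim (\<lambda>t. t * c) (at_right 0) (at_right (0::real))"
    unfolding filterlim_at
  proof
    show "eventually (\<lambda>t. t * c \<in> {0<..} \<and> t * c \<noteq> 0) (at_right (0::real))"
      using eventually_at_right_less[of 0] by eventually_elim (use assms(3) in auto)
    have "((\<lambda>t. t * c) \<longlongrightarrow> 0 * c) (at_right (0::real))"
      by (intro tendsto_intros)
    then show "((\<lambda>t. t * c) \<longlongrightarrow> 0) (at_right (0::real))"
      by simp
  qed
  then have "((\<lambda>t. c * (C ((t * c) *\<^sub>R x) / (t * c))) \<longlongrightarrow> c * tail_copula C x) (at_right 0)"
    by (intro tendsto_mult_left filterlim_compose[OF tail_copula_tendsto[OF assms(1,2)]])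
  moreover have "eventually (\<lambda>t. c * (C ((t * c) *\<^sub>R x) / (t * c)) = C (t *\<^sub>R (c *\<^sub>R x)) / t)
      (at_right 0)"
    using eventually_at_right_less[of 0] by eventually_elim (use assms(3) in \<open>simp add: mult.commute\<close>)
  ultimately have "((\<lambda>t. C (t *\<^sub>R (c *\<^sub>R x)) / t) \<longlongrightarrow> c * tail_copula C x) (at_right 0)"
    by (rule Lim_transform_eventually)
  then show ?thesis
    unfolding tail_copula_def by (intro tendsto_Lim) simp_all
qed

lemma tail_copula_mixture:
  assumes "has_tail_copula C1" "has_tail_copula C2" "x \<in> pos_orthant"
  shows "tail_copula (\<lambda>u. t * C1 u + (1 - t) * C2 u) x
    = t * tail_copula C1 x + (1 - t) * tail_copula C2 x"
proof -
  have "((\<lambda>s. t * (C1 (s *\<^sub>R x) / s) + (1 - t) * (C2 (s *\<^sub>R x) / s))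
      \<longlongrightarrow> t * tail_copula C1 x + (1 - t) * tail_copula C2 x) (at_right 0)"
    by (intro tendsto_intros tail_copula_tendsto assms)
  then show ?thesis
    unfolding tail_copula_def by (intro tendsto_Lim) (simp_all add: add_divide_distrib)
qed

lemma B_set_subset_pos_orthant: "B_set \<subseteq> pos_orthant"
  by (auto simp: B_set_def pos_orthant_def)

lemma one_in_B_set: "(\<chi> i. 1) \<in> B_set"
  by (simp add: B_set_def)

lemma pos_orthant_scaleR_B_setE:
  fixes x :: "real ^ 'd"
  assumes "x \<in> pos_orthant"
  obtains c b where "0 < c" "b \<in> B_set" "x = c *\<^sub>R b"
proof -
  define c where "c = root CARD('d) (\<Prod>i\<in>UNIV. x $ i)"
  have prod_pos: "0 < (\<Prod>i\<in>UNIV. x $ i)"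
    using assms by (intro prod_pos) (simp add: pos_orthant_def)
  then have c_pos: "0 < c"
    by (simp add: c_def)
  have "c ^ CARD('d) = (\<Prod>i\<in>UNIV. x $ i)"
    using prod_pos by (simp add: c_def real_root_pow_pos2)
  then have "(\<Prod>i\<in>UNIV. (inverse c *\<^sub>R x) $ i) = 1"
    using prod_pos by (simp add: prod.distrib power_inverse less_imp_neq [symmetric])
  then have "inverse c *\<^sub>R x \<in> B_set"
    using assms c_pos by (simp add: B_set_def pos_orthant_def)
  moreover have "x = c *\<^sub>R (inverse c *\<^sub>R x)"
    using c_pos by simp
  ultimately show ?thesis
    using that c_pos by blast
qed

lemma tail_copula_le_one:
  fixes C :: "real ^ 'd \<Rightarrow> real"
  assumes "is_copula C" "has_tail_copula C" "b \<in> B_set"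
  shows "tail_copula C b \<le> 1"
proof -
  have b: "b \<in> pos_orthant" using assms(3) B_set_subset_pos_orthant by blast
  have "tail_copula C b ^ CARD('d) = (\<Prod>i\<in>(UNIV :: 'd set). tail_copula C b)"
    by simp
  also have "\<dots> \<le> (\<Prod>i\<in>UNIV. b $ i)"
    using tail_copula_nonneg[OF assms(1,2) b] tail_copula_le_component[OF assms(1,2) b]
    by (intro prod_mono) simp
  also have "\<dots> = 1" using assms(3) by (simp add: B_set_def)
  finally show ?thesis
    using tail_copula_nonneg[OF assms(1,2) b] by (simp add: power_le_one_iff)
qed

lemma tail_copula_le_mtcm:
  fixes C :: "real ^ 'd \<Rightarrow> real"
  assumes "is_copula C" "has_tail_copula C" "b \<in> B_set"
  shows "tail_copula C b \<le> mtcm C"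
  unfolding mtcm_def using assms tail_copula_le_one
  by (intro cSUP_upper bdd_aboveI[of _ 1]) auto

lemma mtcm_least:
  assumes "\<And>b. b \<in> B_set \<Longrightarrow> tail_copula C b \<le> M"
  shows "mtcm C \<le> M"
  unfolding mtcm_def using one_in_B_set assms by (intro cSUP_least) auto

lemma mtcm_nonneg:
  fixes C :: "real ^ 'd \<Rightarrow> real"
  assumes "is_copula C" "has_tail_copula C"
  shows "0 \<le> mtcm C"
  using tail_copula_nonneg[OF assms] tail_copula_le_mtcm[OF assms one_in_B_set]
    one_in_B_set B_set_subset_pos_orthant by force

lemma mtcm_le_one:
  fixes C :: "real ^ 'd \<Rightarrow> real"
  assumes "is_copula C" "has_tail_copula C"
  shows "mtcm C \<le> 1"
  using tail_copula_le_one[OF assms] by (rule mtcm_least)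

definition B_set_ge :: "real \<Rightarrow> (real ^ 'd) set" where
  "B_set_ge e = {b \<in> B_set. \<forall>i. e \<le> b $ i}"

lemma compact_B_set_ge:
  assumes "0 < e"
  shows "compact (B_set_ge e :: (real ^ 'd) set)"
proof -
  define R where "R = 1 / e ^ (CARD('d) - 1)"
  have le_R: "b $ i \<le> R" if "b \<in> B_set_ge e" for b :: "real ^ 'd" and i
  proof -
    have "1 = b $ i * (\<Prod>j\<in>UNIV - {i}. b $ j)"
      using that prod.remove[of UNIV i "\<lambda>j. b $ j"] by (simp add: B_set_ge_def B_set_def)
    also have "\<dots> \<ge> b $ i * (\<Prod>j\<in>UNIV - {i}. e)"
      using that assms by (intro mult_left_mono prod_mono) (auto simp: B_set_ge_def B_set_def less_imp_le)
    finally have "b $ i * e ^ (CARD('d) - 1) \<le> 1"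
      by (simp add: card_Diff_singleton)
    then show ?thesis unfolding R_def using assms by (simp add: field_simps)
  qed
  have "norm b \<le> real CARD('d) * R" if "b \<in> B_set_ge e" for b :: "real ^ 'd"
  proof -
    have "norm b \<le> (\<Sum>i\<in>UNIV. \<bar>b $ i\<bar>)" by (rule norm_le_l1_cart)
    also have "\<dots> \<le> (\<Sum>i\<in>(UNIV :: 'd set). R)"
      using that le_R by (intro sum_mono) (auto simp: B_set_ge_def B_set_def less_imp_le)
    finally show ?thesis by simp
  qed
  then have "bounded (B_set_ge e :: (real ^ 'd) set)"
    unfolding bounded_iff by blast
  moreover have "B_set_ge e = {b :: real ^ 'd. (\<forall>i. e \<le> b $ i) \<and> (\<Prod>i\<in>UNIV. b $ i) = 1}"
    using assms by (auto simp: B_set_ge_def B_set_def intro: less_le_trans)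
  then have "closed (B_set_ge e :: (real ^ 'd) set)"
    by (simp only:) (intro closed_Collect_conj closed_Collect_all closed_Collect_le
        closed_Collect_eq continuous_intros)
  ultimately show ?thesis by (simp add: compact_eq_bounded_closed)
qed

lemma mtcm_le_max_B_set_ge:
  fixes C :: "real ^ 'd \<Rightarrow> real"
  assumes "is_copula C" "has_tail_copula C"
    and "\<And>b. b \<in> B_set_ge e \<Longrightarrow> tail_copula C b \<le> M"
  shows "mtcm C \<le> max M e"
proof (rule mtcm_least)
  fix b :: "real ^ 'd"
  assume b: "b \<in> B_set"
  show "tail_copula C b \<le> max M e"
  proof (cases "b \<in> B_set_ge e")
    case True
    then show ?thesis using assms(3) by fastforce
  next
    case False
    then obtain i where "b $ i < e" using b by (auto simp: B_set_ge_def not_le)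
    moreover have "tail_copula C b \<le> b $ i"
      using b B_set_subset_pos_orthant by (intro tail_copula_le_component[OF assms(1,2)]) blast
    ultimately show ?thesis by simp
  qed
qed

lemma mtcm_attained:
  fixes C :: "real ^ 'd \<Rightarrow> real"
  assumes "is_copula C" "has_tail_copula C"
  obtains b where "b \<in> B_set" "tail_copula C b = mtcm C"
proof (cases "mtcm C = 0")
  case True
  then show ?thesis
    using that one_in_B_set tail_copula_le_mtcm[OF assms one_in_B_set]
      tail_copula_nonneg[OF assms, of "\<chi> i. 1"] B_set_subset_pos_orthant
    by force
next
  case False
  define e where "e = mtcm C / 2"
  have e: "0 < e" "e < mtcm C" "e \<le> 1"
    using False mtcm_nonneg[OF assms] mtcm_le_one[OF assms] by (auto simp: e_def)
  have "(\<chi> i. 1) \<in> B_set_ge e"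
    using one_in_B_set e(3) by (simp add: B_set_ge_def)
  moreover have "continuous_on (B_set_ge e) (tail_copula C)"
    using B_set_subset_pos_orthant
    by (intro continuous_on_subset[OF lipschitz_on_continuous_on[OF tail_copula_lipschitz[OF assms]]])
      (auto simp: B_set_ge_def)
  ultimately obtain b where b: "b \<in> B_set_ge e"
    "\<And>b'. b' \<in> B_set_ge e \<Longrightarrow> tail_copula C b' \<le> tail_copula C b"
    using continuous_attains_sup[OF compact_B_set_ge[OF e(1)]] by blast
  then have "b \<in> B_set" by (simp add: B_set_ge_def)
  moreover have "mtcm C \<le> max (tail_copula C b) e"
    using b(2) by (rule mtcm_le_max_B_set_ge[OF assms])
  then have "mtcm C \<le> tail_copula C b"
    using e(2) by linarith
  ultimately show ?thesis
    using that tail_copula_le_mtcm[OF assms] by (meson order_antisym)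
qed

lemma tail_copula_eq_Min:
  fixes C :: "real ^ 'd \<Rightarrow> real"
  assumes "is_copula C" "has_tail_copula C" "tail_copula C (\<chi> i. 1) = 1" "x \<in> pos_orthant"
  shows "tail_copula C x = Min (range (\<lambda>i. x $ i))"
proof -
  define m where "m = Min (range (\<lambda>i. x $ i))"
  have "m \<in> range (\<lambda>i. x $ i)"
    unfolding m_def by (intro Min_in) auto
  then obtain i0 where i0: "m = x $ i0"
    by blast
  have m_le: "m \<le> x $ i" for i
    unfolding m_def by (intro Min_le) auto
  have m_pos: "0 < m"
    using i0 assms(4) by (simp add: pos_orthant_def)
  have one: "((\<chi> i. 1) :: real ^ 'd) \<in> pos_orthant"
    by (simp add: pos_orthant_def)
  have "m = tail_copula C (m *\<^sub>R (\<chi> i. 1))"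
    using tail_copula_scaleR[OF assms(2) one m_pos] assms(3) by simp
  also have "\<dots> \<le> tail_copula C x"
    using m_pos m_le assms(4) by (intro tail_copula_mono[OF assms(1,2)]) (auto simp: pos_orthant_def)
  finally show ?thesis
    using tail_copula_le_component[OF assms(1,2,4), of i0] i0 unfolding m_def by simp
qed

lemma mtcm_eq_1_iff:
  fixes C :: "real ^ 'd \<Rightarrow> real"
  assumes "is_copula C" "has_tail_copula C"
  shows "mtcm C = 1 \<longleftrightarrow> (\<forall>x\<in>pos_orthant. tail_copula C x = Min (range (\<lambda>i. x $ i)))"
proof
  assume "mtcm C = 1"
  then obtain b where b: "b \<in> B_set" "tail_copula C b = 1"
    using mtcm_attained[OF assms] by metis
  then have "1 \<le> b $ i" for i
    using tail_copula_le_component[OF assms, of b i] B_set_subset_pos_orthant by auto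
  then have "b $ i = 1" for i
    using b(1) by (intro prod_eq_1_imp_eq_1[of UNIV "\<lambda>i. b $ i"]) (auto simp: B_set_def)
  then have "b = (\<chi> i. 1)"
    by (simp add: vec_eq_iff)
  then show "\<forall>x\<in>pos_orthant. tail_copula C x = Min (range (\<lambda>i. x $ i))"
    using tail_copula_eq_Min[OF assms] b(2) by blast
next
  assume Min: "\<forall>x\<in>pos_orthant. tail_copula C x = Min (range (\<lambda>i. x $ i))"
  have "((\<chi> i. 1) :: real ^ 'd) \<in> pos_orthant"
    using one_in_B_set B_set_subset_pos_orthant by blast
  then have "tail_copula C (\<chi> i. 1) = Min (range (\<lambda>i. ((\<chi> i. 1) :: real ^ 'd) $ i))"
    using Min by blast
  also have "range (\<lambda>i. ((\<chi> i. 1) :: real ^ 'd) $ i) = {1}"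
    by auto
  finally have "tail_copula C (\<chi> i. 1) = 1"
    by simp
  then show "mtcm C = 1"
    using tail_copula_le_mtcm[OF assms one_in_B_set] mtcm_le_one[OF assms] by simp
qed

lemma mtcm_eq_0_iff:
  fixes C :: "real ^ 'd \<Rightarrow> real"
  assumes "is_copula C" "has_tail_copula C"
  shows "mtcm C = 0 \<longleftrightarrow> (\<forall>x\<in>pos_orthant. tail_copula C x = 0)"
proof
  assume mtcm_0: "mtcm C = 0"
  show "\<forall>x\<in>pos_orthant. tail_copula C x = 0"
  proof
    fix x :: "real ^ 'd"
    assume "x \<in> pos_orthant"
    then obtain c b where cb: "0 < c" "b \<in> B_set" "x = c *\<^sub>R b"
      by (rule pos_orthant_scaleR_B_setE)
    then have "b \<in> pos_orthant"
      using B_set_subset_pos_orthant by blast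
    then have "tail_copula C b = 0"
      using tail_copula_le_mtcm[OF assms cb(2)] tail_copula_nonneg[OF assms] mtcm_0 by force
    then show "tail_copula C x = 0"
      using tail_copula_scaleR[OF assms(2) \<open>b \<in> pos_orthant\<close> cb(1)] cb(3) by simp
  qed
next
  assume "\<forall>x\<in>pos_orthant. tail_copula C x = 0"
  then have "mtcm C \<le> 0"
    using B_set_subset_pos_orthant by (intro mtcm_least) auto
  then show "mtcm C = 0"
    using mtcm_nonneg[OF assms] by simp
qed

lemma mtcm_mono:
  fixes C1 C2 :: "real ^ 'd \<Rightarrow> real"
  assumes "is_copula C2" "has_tail_copula C2"
    and "\<And>x. x \<in> pos_orthant \<Longrightarrow> tail_copula C1 x \<le> tail_copula C2 x"
  shows "mtcm C1 \<le> mtcm C2"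
proof (rule mtcm_least)
  fix b :: "real ^ 'd"
  assume b: "b \<in> B_set"
  then have "b \<in> pos_orthant"
    using B_set_subset_pos_orthant by blast
  then show "tail_copula C1 b \<le> mtcm C2"
    using order_trans[OF assms(3) tail_copula_le_mtcm[OF assms(1,2) b]] by blast
qed

lemma mtcm_mixture_le:
  fixes C1 C2 :: "real ^ 'd \<Rightarrow> real"
  assumes "is_copula C1" "has_tail_copula C1" "is_copula C2" "has_tail_copula C2"
    and "t \<in> {0..1}"
  shows "mtcm (\<lambda>u. t * C1 u + (1 - t) * C2 u) \<le> t * mtcm C1 + (1 - t) * mtcm C2"
proof (rule mtcm_least)
  fix b :: "real ^ 'd"
  assume b: "b \<in> B_set"
  then have "tail_copula (\<lambda>u. t * C1 u + (1 - t) * C2 u) b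
      = t * tail_copula C1 b + (1 - t) * tail_copula C2 b"
    using B_set_subset_pos_orthant by (intro tail_copula_mixture assms(2,4)) blast
  also have "\<dots> \<le> t * mtcm C1 + (1 - t) * mtcm C2"
    using assms(5) tail_copula_le_mtcm[OF assms(1,2) b] tail_copula_le_mtcm[OF assms(3,4) b]
    by (intro add_mono mult_left_mono) auto
  finally show "tail_copula (\<lambda>u. t * C1 u + (1 - t) * C2 u) b \<le> t * mtcm C1 + (1 - t) * mtcm C2" .
qed

lemma mtcm_tendsto:
  fixes C :: "real ^ 'd \<Rightarrow> real" and Cs :: "nat \<Rightarrow> real ^ 'd \<Rightarrow> real"
  assumes "is_copula C" "has_tail_copula C"
    and "\<And>n. is_copula (Cs n)" "\<And>n. has_tail_copula (Cs n)"
    and "\<And>x. x \<in> pos_orthant \<Longrightarrow> (\<lambda>n. tail_copula (Cs n) x) \<longlonglongrightarrow> tail_copula C x"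
  shows "(\<lambda>n. mtcm (Cs n)) \<longlonglongrightarrow> mtcm C"
proof (rule tendstoI)
  fix e :: real
  assume e: "0 < e"
  obtain b0 where b0: "b0 \<in> B_set" "tail_copula C b0 = mtcm C"
    using mtcm_attained[OF assms(1,2)] .
  then have "(\<lambda>n. tail_copula (Cs n) b0) \<longlonglongrightarrow> mtcm C"
    using assms(5)[of b0] B_set_subset_pos_orthant by auto
  then have "eventually (\<lambda>n. dist (tail_copula (Cs n) b0) (mtcm C) < e) sequentially"
    using e by (rule tendstoD)
  then have lower: "eventually (\<lambda>n. mtcm C - e < mtcm (Cs n)) sequentially"
  proof eventually_elim
    case (elim n)
    moreover have "tail_copula (Cs n) b0 \<le> mtcm (Cs n)"
      using assms(3,4) b0(1) by (rule tail_copula_le_mtcm)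
    ultimately show ?case
      by (simp add: dist_real_def abs_less_iff)
  qed
  define K :: "(real ^ 'd) set" where "K = B_set_ge (e / 2)"
  have K: "compact K" "K \<subseteq> pos_orthant"
    using e compact_B_set_ge[of "e / 2"] B_set_subset_pos_orthant by (auto simp: K_def B_set_ge_def)
  have "uniform_limit K (\<lambda>n. tail_copula (Cs n)) (tail_copula C) sequentially"
  proof (rule uniform_limit_equi_lipschitz_compact[OF K(1)])
    show "(real CARD('d))-lipschitz_on K (tail_copula (Cs n))" for n
      using tail_copula_lipschitz[OF assms(3,4)] K(2) by (rule lipschitz_on_subset)
    show "(real CARD('d))-lipschitz_on K (tail_copula C)"
      using tail_copula_lipschitz[OF assms(1,2)] K(2) by (rule lipschitz_on_subset)
    show "(\<lambda>n. tail_copula (Cs n) x) \<longlonglongrightarrow> tail_copula C x" if "x \<in> K" for x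
      using that K(2) assms(5) by blast
  qed
  then have "eventually (\<lambda>n. \<forall>b\<in>K. dist (tail_copula (Cs n) b) (tail_copula C b) < e / 2)
      sequentially"
    using e unfolding uniform_limit_iff by (meson half_gt_zero)
  then have upper: "eventually (\<lambda>n. mtcm (Cs n) \<le> mtcm C + e / 2) sequentially"
  proof eventually_elim
    case (elim n)
    have "tail_copula (Cs n) b \<le> mtcm C + e / 2" if "b \<in> K" for b
    proof -
      have "tail_copula C b \<le> mtcm C"
        using that by (intro tail_copula_le_mtcm[OF assms(1,2)]) (simp add: K_def B_set_ge_def)
      moreover have "dist (tail_copula (Cs n) b) (tail_copula C b) < e / 2"
        using elim that by blast
      ultimately show ?thesis
        unfolding dist_real_def by linarith
    qed
    then have "mtcm (Cs n) \<le> max (mtcm C + e / 2) (e / 2)"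
      unfolding K_def by (rule mtcm_le_max_B_set_ge[OF assms(3,4)])
    then show ?case
      using mtcm_nonneg[OF assms(1,2)] by simp
  qed
  show "eventually (\<lambda>n. dist (mtcm (Cs n)) (mtcm C) < e) sequentially"
    using lower upper by eventually_elim (use e in \<open>simp add: dist_real_def abs_less_iff\<close>)
qed

theorem proposition2p2:
  fixes C C1 C2 :: "real ^ 'd \<Rightarrow> real"
  assumes "CARD('d) \<ge> 2"
    and "is_copula C" and "has_tail_copula C"
    and "is_copula C1" and "has_tail_copula C1"
    and "is_copula C2" and "has_tail_copula C2"
  shows "(\<exists>b\<in>B_set. tail_copula C b = mtcm C)
    \<and> (mtcm C = 1 \<longleftrightarrow> (\<forall>x\<in>pos_orthant. tail_copula C x = Min (range (\<lambda>i. x $ i))))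
    \<and> (mtcm C = 0 \<longleftrightarrow> (\<forall>x\<in>pos_orthant. tail_copula C x = 0))
    \<and> ((\<forall>x\<in>pos_orthant. tail_copula C1 x \<le> tail_copula C2 x) \<longrightarrow> mtcm C1 \<le> mtcm C2)
    \<and> (\<forall>t\<in>{0..1::real}. mtcm (\<lambda>u. t * C1 u + (1 - t) * C2 u) \<le> t * mtcm C1 + (1 - t) * mtcm C2)
    \<and> (\<forall>Cs :: nat \<Rightarrow> real ^ 'd \<Rightarrow> real.
         (\<forall>n. is_copula (Cs n) \<and> has_tail_copula (Cs n)) \<longrightarrow>
         (\<forall>x\<in>pos_orthant. (\<lambda>n. tail_copula (Cs n) x) \<longlonglongrightarrow> tail_copula C x) \<longrightarrow>
         (\<lambda>n. mtcm (Cs n)) \<longlonglongrightarrow> mtcm C)"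
proof (intro conjI ballI allI impI)
  show "\<exists>b\<in>B_set. tail_copula C b = mtcm C"
    by (rule mtcm_attained[OF assms(2,3)]) blast
  show "mtcm C = 1 \<longleftrightarrow> (\<forall>x\<in>pos_orthant. tail_copula C x = Min (range (\<lambda>i. x $ i)))"
    by (rule mtcm_eq_1_iff[OF assms(2,3)])
  show "mtcm C = 0 \<longleftrightarrow> (\<forall>x\<in>pos_orthant. tail_copula C x = 0)"
    by (rule mtcm_eq_0_iff[OF assms(2,3)])
  show "mtcm C1 \<le> mtcm C2" if "\<forall>x\<in>pos_orthant. tail_copula C1 x \<le> tail_copula C2 x"
    using that by (intro mtcm_mono[OF assms(6,7)]) blast
  show "mtcm (\<lambda>u. t * C1 u + (1 - t) * C2 u) \<le> t * mtcm C1 + (1 - t) * mtcm C2"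
    if "t \<in> {0..1}" for t
    using that by (rule mtcm_mixture_le[OF assms(4-7)])
  show "(\<lambda>n. mtcm (Cs n)) \<longlonglongrightarrow> mtcm C"
    if "\<forall>n. is_copula (Cs n) \<and> has_tail_copula (Cs n)"
      and "\<forall>x\<in>pos_orthant. (\<lambda>n. tail_copula (Cs n) x) \<longlonglongrightarrow> tail_copula C x"
    for Cs :: "nat \<Rightarrow> real ^ 'd \<Rightarrow> real"
    using that by (intro mtcm_tendsto[OF assms(2,3)]) auto
qed

end
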